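(* Let $\{A_n\}_{n\ge1}$ be i.i.d. positive random variables, $X_1=\log A_1$, with $\mathbb EX_1<0$ and $\mathbb E|X_1|^q<\infty$ for some integer $q\ge2$. Let $P$ be the transition kernel on $[0,\infty)$ of the Markov chain $Z_{n+1}=A_{n+1}Z_n+1$, i.e. $PV(x)=\mathbb E[V(A_1x+1)]$, and let $V(x)=(\log x)^q\mathbb 1_{\{x>e\}}+\mathbb 1_{\{x\le e\}}$ for $x\ge0$. Then there exist constants $c>0$, $K<\infty$ and $b<\infty$ such that, with $C=[0,K]$, $$PV(x)\le V(x)-cV(x)^{(q-1)/q}+b\mathbb 1_C(x)\qquad\text{for all }x\ge0.$$ *)

theory Defs
  imports "HOL-Probability.Probability"
begin

definition lyapV :: "nat \<Rightarrow> real \<Rightarrow> real" where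
  "lyapV q x = (if x > exp 1 then (ln x) ^ q else 1)"

end

theory Submission
  imports Defs
begin

text \<open>
  Since \<open>E ln (A + \<delta>) \<rightarrow> E ln A < 0\<close> as \<open>\<delta> \<rightarrow> 0\<close>, some \<open>\<delta> > 0\<close> keeps
  \<open>Z = ln (A + \<delta>)\<close> of negative mean \<open>m\<close>. For \<open>x \<ge> 1/\<delta>\<close> we have \<open>ln (A x + 1) \<le> L + Z\<close> with
  \<open>L = ln x\<close>, and expanding \<open>(L + Z)^q\<close> binomially gives
  \<open>E V(A x + 1) \<le> L^q + q m L^(q-1) + O(L^(q-2))\<close>, the error being controlled by the
  \<open>q\<close>-th moment of \<open>Z\<close>. As \<open>V(x)^((q-1)/q) = L^(q-1)\<close>, this is the drift for large \<open>x\<close>;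
  on \<open>[0, K]\<close> both sides are bounded. Only the law of \<open>A\<^sub>1\<close> enters the one-step kernel.
\<close>

lemma mixed_power_le:
  fixes L z :: real and n k :: nat
  assumes L: "L \<ge> 0" and k: "2 \<le> k" "k \<le> n + 2"
  shows "z ^ k * L ^ (n + 2 - k) \<le> L ^ n * z\<^sup>2 + \<bar>z\<bar> ^ (n + 2)"
proof -
  have "z ^ k * L ^ (n + 2 - k) \<le> \<bar>z\<bar> ^ k * L ^ (n + 2 - k)"
    using L by (intro mult_right_mono) (auto simp flip: power_abs)
  also have "\<dots> \<le> L ^ n * z\<^sup>2 + \<bar>z\<bar> ^ (n + 2)"
  proof (cases "\<bar>z\<bar> \<le> L")
    case True
    have "\<bar>z\<bar> ^ k = \<bar>z\<bar> ^ (2 + (k - 2))" using k by (simp only: le_add_diff_inverse)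
    then have "\<bar>z\<bar> ^ k * L ^ (n + 2 - k) = z\<^sup>2 * (\<bar>z\<bar> ^ (k - 2) * L ^ (n + 2 - k))"
      by (simp only: power_add power2_abs mult.assoc)
    also have "\<dots> \<le> z\<^sup>2 * (L ^ (k - 2) * L ^ (n + 2 - k))"
      using True L by (intro mult_left_mono mult_right_mono power_mono) auto
    also have "\<dots> = z\<^sup>2 * L ^ (k - 2 + (n + 2 - k))" by (simp add: power_add)
    also have "k - 2 + (n + 2 - k) = n" using k by simp
    finally show ?thesis by (simp add: mult.commute add_increasing2)
  next
    case False
    have "\<bar>z\<bar> ^ k * L ^ (n + 2 - k) \<le> \<bar>z\<bar> ^ k * \<bar>z\<bar> ^ (n + 2 - k)"
      using False L by (intro mult_left_mono power_mono) auto
    also have "\<dots> = \<bar>z\<bar> ^ (n + 2)"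
      using k by (simp flip: power_add)
    finally show ?thesis using L by (simp add: add_increasing)
  qed
  finally show ?thesis .
qed

lemma power_add_le_first_order:
  fixes L z :: real and n :: nat
  assumes L: "L \<ge> 0"
  shows "(L + z) ^ (n + 2)
    \<le> L ^ (n + 2) + real (n + 2) * L ^ (n + 1) * z + 2 ^ (n + 2) * (L ^ n * z\<^sup>2 + \<bar>z\<bar> ^ (n + 2))"
proof -
  let ?q = "n + 2" and ?R = "L ^ n * z\<^sup>2 + \<bar>z\<bar> ^ (n + 2)"
  let ?t = "\<lambda>k. real (?q choose k) * z ^ k * L ^ (?q - k)"
  have R: "?R \<ge> 0" using L by simp
  have "(L + z) ^ ?q = (\<Sum>k\<le>?q. ?t k)"
    using binomial_ring[of z L ?q] by (simp add: add.commute)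
  also have "\<dots> = L ^ ?q + real ?q * L ^ (n + 1) * z + (\<Sum>k=2..?q. ?t k)"
    by (simp add: atMost_atLeast0 sum.atLeast_Suc_atMost numeral_2_eq_2)
  finally have expansion: "(L + z) ^ ?q = L ^ ?q + real ?q * L ^ (n + 1) * z + (\<Sum>k=2..?q. ?t k)" .
  have "(\<Sum>k=2..?q. ?t k) \<le> (\<Sum>k=2..?q. real (?q choose k) * ?R)"
    using mixed_power_le[OF L] by (intro sum_mono) (simp add: mult.assoc mult_left_mono)
  also have "\<dots> \<le> (\<Sum>k\<le>?q. real (?q choose k)) * ?R"
    using R by (simp add: sum_distrib_right[symmetric] mult_right_mono sum_mono2)
  also have "(\<Sum>k\<le>?q. real (?q choose k)) = 2 ^ ?q"
    using choose_row_sum[of ?q] by (metis of_nat_numeral of_nat_power of_nat_sum)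
  finally have "(\<Sum>k=2..?q. ?t k) \<le> 2 ^ ?q * ?R" .
  then show ?thesis unfolding expansion by (rule add_left_mono)
qed

lemma first_order_part_nonneg:
  fixes L z :: real and n :: nat
  assumes L: "L \<ge> 0"
  shows "0 \<le> L ^ (n + 2) + real (n + 2) * L ^ (n + 1) * z + (real (n + 2))\<^sup>2 * (L ^ n * z\<^sup>2)"
proof -
  have "4 * (L ^ (n + 2) + real (n + 2) * L ^ (n + 1) * z + (real (n + 2))\<^sup>2 * (L ^ n * z\<^sup>2))
      = L ^ n * (2 * L + real (n + 2) * z)\<^sup>2 + 3 * (real (n + 2))\<^sup>2 * (L ^ n * z\<^sup>2)"
    by (simp add: power2_eq_square algebra_simps)
  also have "\<dots> \<ge> 0" using L by simp
  finally show ?thesis by simp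
qed

lemma power_sum_le:
  fixes a b :: real
  assumes "a \<ge> 0" "b \<ge> 0"
  shows "(a + b) ^ q \<le> 2 ^ q * (a ^ q + b ^ q)"
proof -
  have "(a + b) ^ q \<le> (2 * max a b) ^ q" using assms by (intro power_mono) auto
  also have "\<dots> = 2 ^ q * max a b ^ q" by (simp add: power_mult_distrib)
  also have "max a b ^ q \<le> a ^ q + b ^ q" using assms by (auto simp: max_def)
  finally show ?thesis by simp
qed

lemma eventually_le_times_power:
  fixes a b d :: real and n :: nat
  assumes d: "d > 0"
  shows "\<forall>\<^sub>F L in at_top. a + b * L ^ n \<le> d * L ^ (n + 1)"
  using eventually_ge_at_top[of "max 1 ((\<bar>a\<bar> + \<bar>b\<bar>) / d)"]
proof eventually_elim
  case (elim L)
  then have L: "L \<ge> 1" "(\<bar>a\<bar> + \<bar>b\<bar>) / d \<le> L" by auto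
  have Ln: "L ^ n \<ge> 1" using L by simp
  have "a \<le> \<bar>a\<bar> * L ^ n"
    using Ln mult_left_mono[OF Ln, of "\<bar>a\<bar>"] by linarith
  moreover have "b * L ^ n \<le> \<bar>b\<bar> * L ^ n"
    using Ln by (intro mult_right_mono) auto
  ultimately have "a + b * L ^ n \<le> \<bar>a\<bar> * L ^ n + \<bar>b\<bar> * L ^ n" by linarith
  also have "\<dots> = (\<bar>a\<bar> + \<bar>b\<bar>) * L ^ n" by (simp add: algebra_simps)
  also have "\<dots> \<le> d * L * L ^ n"
    using L d Ln by (intro mult_right_mono) (auto simp: divide_le_eq mult.commute)
  finally show ?case by (simp add: mult_ac)
qed

lemma lyapV_ge_one: "1 \<le> lyapV q x"
proof (cases "x > exp 1")
  case True
  then have "ln x > 1"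
    by (metis exp_gt_zero less_trans ln_exp ln_less_cancel_iff)
  with True show ?thesis
    by (simp add: lyapV_def one_le_power)
qed (simp add: lyapV_def)

lemma lyapV_nonneg: "0 \<le> lyapV q x"
  using lyapV_ge_one[of q x] by linarith

lemma lyapV_measurable [measurable]: "lyapV q \<in> borel_measurable borel"
  unfolding lyapV_def by measurable

lemma lyapV_powr_eq:
  assumes "x > exp 1" "q \<ge> 1"
  shows "lyapV q x powr (real (q - 1) / real q) = ln x ^ (q - 1)"
proof -
  have L: "ln x > 0"
    using assms(1) by (metis exp_gt_zero less_trans ln_gt_zero one_less_exp_iff zero_less_one)
  have "lyapV q x powr (real (q - 1) / real q) = (ln x powr real q) powr (real (q - 1) / real q)"
    using assms(1) L by (simp add: lyapV_def powr_realpow)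
  also have "\<dots> = ln x powr real (q - 1)"
    using assms(2) by (simp add: powr_powr)
  also have "\<dots> = ln x ^ (q - 1)"
    using L by (simp add: powr_realpow)
  finally show ?thesis .
qed

lemma lyapV_powr_le: "lyapV q x powr (real (q - 1) / real q) \<le> lyapV q x"
proof -
  have "lyapV q x powr (real (q - 1) / real q) \<le> lyapV q x powr 1"
    using lyapV_ge_one by (intro powr_mono) (auto simp: divide_le_eq_1)
  then show ?thesis using lyapV_ge_one[of q x] by simp
qed

lemma lyapV_le_of_le:
  assumes "0 \<le> x" "x \<le> K"
  shows "lyapV q x \<le> 1 + ln (K + 1) ^ q"
proof (cases "x > exp 1")
  case True
  then have "1 \<le> x" using one_le_exp_iff[of 1] by linarith
  then have "ln x \<le> ln (K + 1)" "0 \<le> ln x"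
    using assms by auto
  then have "ln x ^ q \<le> ln (K + 1) ^ q"
    by (intro power_mono)
  with True show ?thesis by (simp add: lyapV_def)
qed (use assms in \<open>simp add: lyapV_def\<close>)

lemma abs_ln_add_le:
  fixes a d :: real
  assumes a: "a > 0" and d: "0 \<le> d" "d \<le> 1"
  shows "\<bar>ln (a + d)\<bar> \<le> \<bar>ln a\<bar> + 1"
proof -
  have "ln a \<le> ln (a + d)" using a d by simp
  moreover have "ln (a + d) \<le> \<bar>ln a\<bar> + 1"
  proof (cases "a \<le> 1")
    case True
    then have "ln (a + d) \<le> ln 2" using a d by simp
    then show ?thesis using ln_2_less_1 by linarith
  next
    case False
    then have "ln (a + d) \<le> ln (2 * a)" using d by simp
    also have "\<dots> = ln 2 + ln a" using a by (simp add: ln_mult)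
    finally show ?thesis using ln_2_less_1 by linarith
  qed
  ultimately show ?thesis by linarith
qed

lemma ln_affine_le:
  fixes a x \<delta> :: real
  assumes a: "a \<ge> 0" and x: "x > 0" and \<delta>: "1 / x \<le> \<delta>"
  shows "ln (a * x + 1) \<le> ln x + ln (a + \<delta>)"
proof -
  have "\<delta> > 0" using x \<delta> by (meson divide_pos_pos less_le_trans zero_less_one)
  have "a * x + 1 = x * (a + 1 / x)" using x by (simp add: field_simps)
  also have "\<dots> \<le> x * (a + \<delta>)" using x \<delta> by simp
  finally have "ln (a * x + 1) \<le> ln (x * (a + \<delta>))"
    using a x by (intro ln_mono) (auto intro: add_nonneg_pos)
  also have "\<dots> = ln x + ln (a + \<delta>)"
    using a x \<open>\<delta> > 0\<close> by (simp add: ln_mult)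
  finally show ?thesis .
qed

lemma lyapV_affine_le:
  fixes a x :: real
  assumes x: "x \<ge> 0"
  shows "lyapV q (a * x + 1) \<le> 1 + 2 ^ q * (ln (x + 1) ^ q + \<bar>ln a\<bar> ^ q)"
proof (cases "a * x + 1 > exp 1")
  case True
  then have "a * x > 0" using one_le_exp_iff[of 1] by linarith
  then have a: "a > 0" and x: "x > 0" using x by (auto simp: zero_less_mult_iff)
  have "ln (a * x + 1) \<le> ln (x + 1) + \<bar>ln a\<bar>"
  proof (cases "a \<le> 1")
    case True
    then have "a * x + 1 \<le> x + 1" using x by (simp add: mult_left_le_one_le)
    then have "ln (a * x + 1) \<le> ln (x + 1)" using \<open>a * x > 0\<close> by (intro ln_mono) auto
    then show ?thesis by linarith
  next
    case False
    then have "a * x + 1 \<le> a * (x + 1)" by (simp add: algebra_simps)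
    then have "ln (a * x + 1) \<le> ln (a * (x + 1))" using \<open>a * x > 0\<close> by (intro ln_mono) auto
    also have "\<dots> = ln a + ln (x + 1)" using a x by (simp add: ln_mult)
    finally show ?thesis by linarith
  qed
  moreover have "ln (a * x + 1) \<ge> 0" using a x by simp
  ultimately have "ln (a * x + 1) ^ q \<le> (ln (x + 1) + \<bar>ln a\<bar>) ^ q"
    by (intro power_mono)
  also have "\<dots> \<le> 2 ^ q * (ln (x + 1) ^ q + \<bar>ln a\<bar> ^ q)"
    using x by (intro power_sum_le) auto
  finally show ?thesis using True by (simp add: lyapV_def)
qed (use x in \<open>simp add: lyapV_def\<close>)

lemma lyapV_le_expansion:
  fixes L y z :: real and n :: nat
  assumes L: "L \<ge> 0" and y: "ln y \<le> L + z"
  shows "lyapV (n + 2) y \<le> 1 + L ^ (n + 2) + real (n + 2) * L ^ (n + 1) * z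
           + (2 ^ (n + 2) + (real (n + 2))\<^sup>2) * (L ^ n * z\<^sup>2 + \<bar>z\<bar> ^ (n + 2))"
proof -
  let ?R = "L ^ n * z\<^sup>2 + \<bar>z\<bar> ^ (n + 2)"
  have R: "?R \<ge> 0" "(real (n + 2))\<^sup>2 * (L ^ n * z\<^sup>2) \<ge> 0"
    "(real (n + 2))\<^sup>2 * \<bar>z\<bar> ^ (n + 2) \<ge> 0"
    using L by simp_all
  have split: "(2 ^ (n + 2) + (real (n + 2))\<^sup>2) * ?R
      = 2 ^ (n + 2) * ?R + (real (n + 2))\<^sup>2 * (L ^ n * z\<^sup>2) + (real (n + 2))\<^sup>2 * \<bar>z\<bar> ^ (n + 2)"
    by (simp add: algebra_simps)
  show ?thesis
  proof (cases "y > exp 1")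
    case True
    then have "ln y > 1"
      by (metis exp_gt_zero less_trans ln_exp ln_less_cancel_iff)
    then have "ln y ^ (n + 2) \<le> (L + z) ^ (n + 2)"
      using y by (intro power_mono) auto
    then have "lyapV (n + 2) y \<le> (L + z) ^ (n + 2)"
      using True by (simp add: lyapV_def)
    then show ?thesis
      using power_add_le_first_order[OF L, of z n] split R by linarith
  next
    case False
    then have "lyapV (n + 2) y = 1" by (simp add: lyapV_def)
    moreover have "2 ^ (n + 2) * ?R \<ge> 0" using R by simp
    ultimately show ?thesis
      using first_order_part_nonneg[OF L, of n z] split R by linarith
  qed
qed

context finite_measure
begin

lemma integrable_abs_power_le:
  fixes f :: "'a \<Rightarrow> real"
  assumes [measurable]: "f \<in> borel_measurable M"
    and int: "integrable M (\<lambda>x. \<bar>f x\<bar> ^ q)" and "p \<le> q"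
  shows "integrable M (\<lambda>x. \<bar>f x\<bar> ^ p)"
proof (rule Bochner_Integration.integrable_bound)
  show "integrable M (\<lambda>x. 1 + \<bar>f x\<bar> ^ q)" using int by simp
  have "\<bar>f x\<bar> ^ p \<le> 1 + \<bar>f x\<bar> ^ q" for x
  proof (cases "\<bar>f x\<bar> \<le> 1")
    case True
    then have "\<bar>f x\<bar> ^ p \<le> 1" by (simp add: power_le_one)
    then show ?thesis by (simp add: add_increasing2)
  next
    case False
    then have "\<bar>f x\<bar> ^ p \<le> \<bar>f x\<bar> ^ q" using \<open>p \<le> q\<close> by (intro power_increasing) auto
    then show ?thesis by simp
  qed
  then show "AE x in M. norm (\<bar>f x\<bar> ^ p) \<le> norm (1 + \<bar>f x\<bar> ^ q)"
    by (simp add: add_nonneg_nonneg)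
qed simp

lemma integrable_abs_power_dominated:
  fixes f g :: "'a \<Rightarrow> real"
  assumes [measurable]: "g \<in> borel_measurable M"
    and int: "integrable M (\<lambda>x. \<bar>f x\<bar> ^ q)"
    and dom: "AE x in M. \<bar>g x\<bar> \<le> \<bar>f x\<bar> + 1"
  shows "integrable M (\<lambda>x. \<bar>g x\<bar> ^ q)"
proof (rule Bochner_Integration.integrable_bound)
  show "integrable M (\<lambda>x. 2 ^ q * (\<bar>f x\<bar> ^ q + 1))" using int by simp
  show "AE x in M. norm (\<bar>g x\<bar> ^ q) \<le> norm (2 ^ q * (\<bar>f x\<bar> ^ q + 1 :: real))"
    using dom
  proof eventually_elim
    case (elim x)
    then have "\<bar>g x\<bar> ^ q \<le> (\<bar>f x\<bar> + 1) ^ q" by (intro power_mono) auto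
    also have "\<dots> \<le> 2 ^ q * (\<bar>f x\<bar> ^ q + 1 ^ q)" by (intro power_sum_le) auto
    finally show ?case by simp
  qed
qed simp

end

context prob_space
begin

lemma obtain_shift_negative_ln_mean:
  fixes f :: "'a \<Rightarrow> real"
  assumes [measurable]: "f \<in> borel_measurable M" and pos: "AE \<omega> in M. f \<omega> > 0"
    and int: "integrable M (\<lambda>\<omega>. ln (f \<omega>))" and neg: "expectation (\<lambda>\<omega>. ln (f \<omega>)) < 0"
  obtains \<delta> where "0 < \<delta>" "\<delta> \<le> 1" "expectation (\<lambda>\<omega>. ln (f \<omega> + \<delta>)) < 0"
proof -
  define s where "s i = (\<lambda>\<omega>. ln (f \<omega> + inverse (real (Suc i))))" for i
  have [measurable]: "s i \<in> borel_measurable M" for i unfolding s_def by measurable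
  have "(\<lambda>i. expectation (s i)) \<longlonglongrightarrow> expectation (\<lambda>\<omega>. ln (f \<omega>))"
  proof (rule integral_dominated_convergence)
    show "integrable M (\<lambda>\<omega>. \<bar>ln (f \<omega>)\<bar> + 1)" using int by simp
    show "AE \<omega> in M. (\<lambda>i. s i \<omega>) \<longlonglongrightarrow> ln (f \<omega>)"
      using pos
    proof eventually_elim
      case (elim \<omega>)
      have "(\<lambda>i. f \<omega> + inverse (real (Suc i))) \<longlonglongrightarrow> f \<omega> + 0"
        by (intro tendsto_add tendsto_const LIMSEQ_inverse_real_of_nat)
      with elim show ?case unfolding s_def by (auto intro!: tendsto_ln)
    qed
    show "AE \<omega> in M. norm (s i \<omega>) \<le> \<bar>ln (f \<omega>)\<bar> + 1" for i
      using pos by eventually_elim (auto simp: s_def inverse_le_1_iff intro!: abs_ln_add_le)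
  qed measurable
  from order_tendstoD(2)[OF this neg] obtain i where "expectation (s i) < 0"
    by (auto simp: eventually_sequentially)
  then show ?thesis
    by (intro that[of "inverse (real (Suc i))"]) (simp_all only: s_def, auto simp: inverse_le_1_iff)
qed

lemma integrable_abs_ln_shift_power:
  fixes f :: "'a \<Rightarrow> real"
  assumes [measurable]: "f \<in> borel_measurable M" and pos: "AE \<omega> in M. f \<omega> > 0"
    and int: "integrable M (\<lambda>\<omega>. \<bar>ln (f \<omega>)\<bar> ^ q)"
    and \<delta>: "0 \<le> \<delta>" "\<delta> \<le> 1" and "p \<le> q"
  shows "integrable M (\<lambda>\<omega>. \<bar>ln (f \<omega> + \<delta>)\<bar> ^ p)"
proof (rule integrable_abs_power_le)
  show "integrable M (\<lambda>\<omega>. \<bar>ln (f \<omega> + \<delta>)\<bar> ^ q)"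
    using pos \<delta> by (intro integrable_abs_power_dominated[OF _ int]) (auto elim!: AE_mp intro!: abs_ln_add_le)
qed (use \<open>p \<le> q\<close> in simp_all)

lemma
  fixes f :: "'a \<Rightarrow> real" and x :: real
  assumes [measurable]: "f \<in> borel_measurable M"
    and int: "integrable M (\<lambda>\<omega>. \<bar>ln (f \<omega>)\<bar> ^ q)" and x: "x \<ge> 0"
  shows integrable_lyapV_affine: "integrable M (\<lambda>\<omega>. lyapV q (f \<omega> * x + 1))"
    and expectation_lyapV_affine_le:
      "expectation (\<lambda>\<omega>. lyapV q (f \<omega> * x + 1))
         \<le> 1 + 2 ^ q * (ln (x + 1) ^ q + expectation (\<lambda>\<omega>. \<bar>ln (f \<omega>)\<bar> ^ q))"
proof -
  let ?F = "\<lambda>\<omega>. 1 + 2 ^ q * (ln (x + 1) ^ q + \<bar>ln (f \<omega>)\<bar> ^ q)"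
  have intF: "integrable M ?F" using int by simp
  have le: "lyapV q (f \<omega> * x + 1) \<le> ?F \<omega>" for \<omega>
    using lyapV_affine_le[OF x] .
  show int_V: "integrable M (\<lambda>\<omega>. lyapV q (f \<omega> * x + 1))"
  proof (rule Bochner_Integration.integrable_bound[OF intF])
    show "AE \<omega> in M. norm (lyapV q (f \<omega> * x + 1)) \<le> norm (?F \<omega>)"
    proof (intro AE_I2)
      fix \<omega>
      have "0 \<le> lyapV q (f \<omega> * x + 1)" by (rule lyapV_nonneg)
      moreover have "0 \<le> ?F \<omega>" using x by simp
      ultimately show "norm (lyapV q (f \<omega> * x + 1)) \<le> norm (?F \<omega>)" using le[of \<omega>] by simp
    qed
  qed measurable
  have "expectation (\<lambda>\<omega>. lyapV q (f \<omega> * x + 1)) \<le> expectation ?F"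
    using int_V intF le by (intro integral_mono)
  also have "\<dots> = 1 + 2 ^ q * (ln (x + 1) ^ q + expectation (\<lambda>\<omega>. \<bar>ln (f \<omega>)\<bar> ^ q))"
    using int by (simp add: prob_space)
  finally show "expectation (\<lambda>\<omega>. lyapV q (f \<omega> * x + 1))
         \<le> 1 + 2 ^ q * (ln (x + 1) ^ q + expectation (\<lambda>\<omega>. \<bar>ln (f \<omega>)\<bar> ^ q))" .
qed

lemma lyapV_drift_bounded:
  fixes f :: "'a \<Rightarrow> real" and c K :: real
  assumes [measurable]: "f \<in> borel_measurable M"
    and int: "integrable M (\<lambda>\<omega>. \<bar>ln (f \<omega>)\<bar> ^ q)" and c: "c \<ge> 0"
  shows "\<exists>b. \<forall>x\<in>{0..K}. expectation (\<lambda>\<omega>. lyapV q (f \<omega> * x + 1))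
            \<le> lyapV q x - c * lyapV q x powr (real (q - 1) / real q) + b"
proof (intro exI ballI)
  fix x assume x: "x \<in> {0..K}"
  let ?V = "1 + ln (K + 1) ^ q"
  have "ln (x + 1) ^ q \<le> ln (K + 1) ^ q"
    using x by (intro power_mono) auto
  then have "expectation (\<lambda>\<omega>. lyapV q (f \<omega> * x + 1))
      \<le> 1 + 2 ^ q * (ln (K + 1) ^ q + expectation (\<lambda>\<omega>. \<bar>ln (f \<omega>)\<bar> ^ q))"
    using expectation_lyapV_affine_le[OF _ int, of x] x by (auto intro: order_trans)
  moreover have "c * lyapV q x powr (real (q - 1) / real q) \<le> c * ?V"
    using lyapV_powr_le lyapV_le_of_le[of x K q] x c by (intro mult_left_mono) (auto intro: order_trans)
  moreover have "0 \<le> lyapV q x" by (rule lyapV_nonneg)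
  ultimately show "expectation (\<lambda>\<omega>. lyapV q (f \<omega> * x + 1))
      \<le> lyapV q x - c * lyapV q x powr (real (q - 1) / real q)
        + (1 + 2 ^ q * (ln (K + 1) ^ q + expectation (\<lambda>\<omega>. \<bar>ln (f \<omega>)\<bar> ^ q)) + c * ?V)"
    by linarith
qed

lemma expectation_lyapV_affine_le_expansion:
  fixes f :: "'a \<Rightarrow> real" and n :: nat and x \<delta> :: real
  assumes [measurable]: "f \<in> borel_measurable M" and pos: "AE \<omega> in M. f \<omega> > 0"
    and int: "integrable M (\<lambda>\<omega>. \<bar>ln (f \<omega>)\<bar> ^ (n + 2))"
    and \<delta>: "0 < \<delta>" "\<delta> \<le> 1" and x: "x > exp 1" "1 / x \<le> \<delta>"
  shows "expectation (\<lambda>\<omega>. lyapV (n + 2) (f \<omega> * x + 1))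
    \<le> 1 + ln x ^ (n + 2) + real (n + 2) * ln x ^ (n + 1) * expectation (\<lambda>\<omega>. ln (f \<omega> + \<delta>))
      + (2 ^ (n + 2) + (real (n + 2))\<^sup>2)
        * (ln x ^ n * expectation (\<lambda>\<omega>. (ln (f \<omega> + \<delta>))\<^sup>2)
           + expectation (\<lambda>\<omega>. \<bar>ln (f \<omega> + \<delta>)\<bar> ^ (n + 2)))"
proof -
  define Z where "Z \<omega> = ln (f \<omega> + \<delta>)" for \<omega>
  define L where "L = ln x"
  define C :: real where "C = 2 ^ (n + 2) + (real (n + 2))\<^sup>2"
  have [measurable]: "Z \<in> borel_measurable M" unfolding Z_def by measurable
  have x0: "x > 0" using x(1) exp_gt_zero less_trans by blast
  have "1 \<le> x" using x(1) one_le_exp_iff[of 1] by linarith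
  then have L: "L \<ge> 0" unfolding L_def by simp
  have moment: "integrable M (\<lambda>\<omega>. \<bar>Z \<omega>\<bar> ^ p)" if "p \<le> n + 2" for p
    unfolding Z_def using pos int \<delta> that by (intro integrable_abs_ln_shift_power) auto
  have intZ: "integrable M Z"
    using moment[of 1] integrable_abs_iff[of Z M] by simp
  have intZ2: "integrable M (\<lambda>\<omega>. (Z \<omega>)\<^sup>2)"
    using moment[of 2] by (simp add: power2_abs)
  define F where "F \<omega> = 1 + L ^ (n + 2) + real (n + 2) * L ^ (n + 1) * Z \<omega>
    + C * (L ^ n * (Z \<omega>)\<^sup>2 + \<bar>Z \<omega>\<bar> ^ (n + 2))" for \<omega>
  have "AE \<omega> in M. lyapV (n + 2) (f \<omega> * x + 1) \<le> F \<omega>"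
    using pos
  proof eventually_elim
    case (elim \<omega>)
    have "ln (f \<omega> * x + 1) \<le> L + Z \<omega>"
      unfolding L_def Z_def using elim x0 x(2) by (intro ln_affine_le) auto
    then show ?case
      unfolding F_def C_def by (rule lyapV_le_expansion[OF L])
  qed
  moreover have "integrable M F"
    unfolding F_def using intZ intZ2 moment[of "n + 2"] by simp
  ultimately have "expectation (\<lambda>\<omega>. lyapV (n + 2) (f \<omega> * x + 1)) \<le> expectation F"
    using integrable_lyapV_affine[OF _ int, of x] x0 by (intro integral_mono_AE) auto
  also have "expectation F = 1 + L ^ (n + 2) + real (n + 2) * L ^ (n + 1) * expectation Z
      + C * (L ^ n * expectation (\<lambda>\<omega>. (Z \<omega>)\<^sup>2) + expectation (\<lambda>\<omega>. \<bar>Z \<omega>\<bar> ^ (n + 2)))"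
    unfolding F_def using intZ intZ2 moment[of "n + 2"] by (simp add: prob_space)
  finally show ?thesis unfolding Z_def L_def C_def .
qed

lemma lyapV_drift_eventually:
  fixes f :: "'a \<Rightarrow> real" and q :: nat and c \<delta> :: real
  assumes [measurable]: "f \<in> borel_measurable M" and pos: "AE \<omega> in M. f \<omega> > 0"
    and q: "q \<ge> 2" and int: "integrable M (\<lambda>\<omega>. \<bar>ln (f \<omega>)\<bar> ^ q)"
    and \<delta>: "0 < \<delta>" "\<delta> \<le> 1" and c: "c < real q * - expectation (\<lambda>\<omega>. ln (f \<omega> + \<delta>))"
  shows "\<forall>\<^sub>F x in at_top. expectation (\<lambda>\<omega>. lyapV q (f \<omega> * x + 1))
           \<le> lyapV q x - c * lyapV q x powr (real (q - 1) / real q)"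
proof -
  obtain n where n: "q = n + 2" using q by (metis add.commute le_Suc_ex)
  define m where "m = expectation (\<lambda>\<omega>. ln (f \<omega> + \<delta>))"
  define EZ2 where "EZ2 = expectation (\<lambda>\<omega>. (ln (f \<omega> + \<delta>))\<^sup>2)"
  define EZq where "EZq = expectation (\<lambda>\<omega>. \<bar>ln (f \<omega> + \<delta>)\<bar> ^ q)"
  define C :: real where "C = 2 ^ q + (real q)\<^sup>2"
  have "\<forall>\<^sub>F L in at_top. (1 + C * EZq) + (C * EZ2) * L ^ n \<le> (real q * - m - c) * L ^ (n + 1)"
    using c unfolding m_def by (intro eventually_le_times_power) simp
  then have "\<forall>\<^sub>F x in at_top.
      (1 + C * EZq) + (C * EZ2) * ln x ^ n \<le> (real q * - m - c) * ln x ^ (n + 1)"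
    using ln_at_top by (rule eventually_compose_filterlim)
  moreover have "\<forall>\<^sub>F x in at_top. x > (exp 1 :: real)" by (rule eventually_gt_at_top)
  moreover have "\<forall>\<^sub>F x in at_top. x \<ge> 1 / \<delta>" by (rule eventually_ge_at_top)
  ultimately show ?thesis
  proof eventually_elim
    case (elim x)
    let ?L = "ln x"
    have "x > 0" using elim(2) exp_gt_zero less_trans by blast
    then have "1 / x \<le> \<delta>"
      using elim(3) \<delta> by (simp add: field_simps)
    then have "expectation (\<lambda>\<omega>. lyapV q (f \<omega> * x + 1))
        \<le> 1 + ?L ^ (n + 2) + real q * ?L ^ (n + 1) * m + C * (?L ^ n * EZ2 + EZq)"
      using expectation_lyapV_affine_le_expansion[OF _ pos _ \<delta>, of n x] int elim
      unfolding n m_def EZ2_def EZq_def C_def by simp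
    also have "\<dots> \<le> ?L ^ (n + 2) - c * ?L ^ (n + 1)"
      using elim(1) by (simp add: algebra_simps)
    also have "\<dots> = lyapV q x - c * lyapV q x powr (real (q - 1) / real q)"
      using lyapV_powr_eq[OF elim(2), of q] q elim(2) by (simp add: lyapV_def n)
    finally show ?case .
  qed
qed

end

theorem mainTheorem10:
  fixes M :: "'a measure" and A :: "nat \<Rightarrow> 'a \<Rightarrow> real" and q :: nat
  assumes "prob_space M"
    and rv: "\<And>n. n \<ge> 1 \<Longrightarrow> A n \<in> borel_measurable M"
    and indep: "prob_space.indep_vars M (\<lambda>_. borel) A {1..}"
    and ident: "\<And>n. n \<ge> 1 \<Longrightarrow> distr M borel (A n) = distr M borel (A 1)"
    and pos: "\<And>n. n \<ge> 1 \<Longrightarrow> AE \<omega> in M. A n \<omega> > 0"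
    and q2: "q \<ge> 2"
    and intX: "integrable M (\<lambda>\<omega>. ln (A 1 \<omega>))"
    and negmean: "prob_space.expectation M (\<lambda>\<omega>. ln (A 1 \<omega>)) < 0"
    and moment: "integrable M (\<lambda>\<omega>. \<bar>ln (A 1 \<omega>)\<bar> ^ q)"
  shows "\<exists>c K b. c > 0 \<and>
           (\<forall>x::real. x \<ge> 0 \<longrightarrow>
              integrable M (\<lambda>\<omega>. lyapV q (A 1 \<omega> * x + 1)) \<and>
              prob_space.expectation M (\<lambda>\<omega>. lyapV q (A 1 \<omega> * x + 1))
                \<le> lyapV q x - c * lyapV q x powr (real (q - 1) / real q)
                   + b * indicator {0..K} x)"
proof -
  interpret prob_space M by fact
  have A1 [measurable]: "A 1 \<in> borel_measurable M" and pos1: "AE \<omega> in M. A 1 \<omega> > 0"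
    using rv pos by simp_all
  obtain \<delta> where \<delta>: "0 < \<delta>" "\<delta> \<le> 1" and neg: "expectation (\<lambda>\<omega>. ln (A 1 \<omega> + \<delta>)) < 0"
    using obtain_shift_negative_ln_mean[OF A1 pos1 intX negmean] by blast
  define c where "c = real q * - expectation (\<lambda>\<omega>. ln (A 1 \<omega> + \<delta>)) / 2"
  have c: "0 < c" "c < real q * - expectation (\<lambda>\<omega>. ln (A 1 \<omega> + \<delta>))"
    using neg q2 by (simp_all add: c_def mult_pos_neg)
  obtain K where drift: "\<And>x. x \<ge> K \<Longrightarrow> expectation (\<lambda>\<omega>. lyapV q (A 1 \<omega> * x + 1))
      \<le> lyapV q x - c * lyapV q x powr (real (q - 1) / real q)"
    using lyapV_drift_eventually[OF A1 pos1 q2 moment \<delta> c(2)]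
    by (auto simp: eventually_at_top_linorder)
  obtain b where bounded: "\<And>x. x \<in> {0..K} \<Longrightarrow> expectation (\<lambda>\<omega>. lyapV q (A 1 \<omega> * x + 1))
      \<le> lyapV q x - c * lyapV q x powr (real (q - 1) / real q) + b"
    using lyapV_drift_bounded[OF A1 moment, of c K] c(1) by force
  show ?thesis
  proof (intro exI conjI allI impI)
    fix x :: real
    assume x: "x \<ge> 0"
    show "integrable M (\<lambda>\<omega>. lyapV q (A 1 \<omega> * x + 1))"
      using integrable_lyapV_affine[OF A1 moment x] .
    show "expectation (\<lambda>\<omega>. lyapV q (A 1 \<omega> * x + 1))
        \<le> lyapV q x - c * lyapV q x powr (real (q - 1) / real q) + b * indicator {0..K} x"
      using drift[of x] bounded[of x] x by (cases "x \<le> K") auto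
  qed (rule c(1))
qed

end
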